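(* Let $k\ge1$ and let $\psi:\mathbb{Z}^k\to\mathbb{Z}^k$ be an automorphism. (i) If some nonzero $r\in\mathbb{Z}^k$ has $\psi$-orbit of cardinality $c$ (finite or infinite), then there exist infinitely many distinct $\psi$-orbits of cardinality $c$. (ii) If $R(\psi)<\infty$, then $0$ is the only fixed point of $\psi$, i.e. there is a unique one-point orbit.
   Context: For an automorphism $\psi$ of an abelian group $G$, $R(\psi)$ is the number of Reidemeister classes, i.e. classes of the relation $g\sim g+h-\psi(h)$, $h\in G$. *)

theory Defs
  imports "HOL-Analysis.Analysis" "HOL-Library.Equipollence"
begin

text \<open>Z^k is modelled as int ^ 'k (k = CARD('k) >= 1). A group automorphism of
  (Z^k,+) is a bijective additive map.\<close>

definition is_aut :: "('a::ab_group_add \<Rightarrow> 'a) \<Rightarrow> bool" where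
  "is_aut \<psi> \<longleftrightarrow> bij \<psi> \<and> (\<forall>x y. \<psi> (x + y) = \<psi> x + \<psi> y)"

definition orbit :: "('a \<Rightarrow> 'a) \<Rightarrow> 'a \<Rightarrow> 'a set" where
  "orbit \<psi> r = {(\<psi> ^^ n) r | n. True} \<union> {(inv \<psi> ^^ n) r | n. True}"

definition reid_rel :: "('a::ab_group_add \<Rightarrow> 'a) \<Rightarrow> ('a \<times> 'a) set" where
  "reid_rel \<psi> = {(g, g'). \<exists>h. g' = g + h - \<psi> h}"

definition reid_finite :: "('a::ab_group_add \<Rightarrow> 'a) \<Rightarrow> bool" where
  "reid_finite \<psi> \<longleftrightarrow> finite (UNIV // reid_rel \<psi>)"

end

theory Submission
  imports Defs
begin

text \<open>(i) Multiplication by a nonzero integer commutes with \<open>\<psi>\<close> and is injective, so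
  the orbits of \<open>r\<close>, \<open>m r\<close>, \<open>m\<^sup>2 r\<close>, ... all have the cardinality of the orbit of \<open>r\<close>; for
  \<open>m > \<bar>r\<^sub>i\<bar>\<close> with \<open>r\<^sub>i \<noteq> 0\<close> no \<open>m\<^sup>j r\<close> is divisible by \<open>m\<^sup>l\<close>, \<open>l > j\<close>, so these orbits are distinct.
  (ii) If \<open>R(\<psi>)\<close> is finite, the classes of \<open>0, e, 2e, ...\<close> repeat for every basis vector \<open>e\<close>,
  so a nonzero multiple of each \<open>e\<close> lies in the image of \<open>id - \<psi>\<close>. Then the real-linear
  extension of \<open>id - \<psi>\<close> to \<open>\<real>\<^sup>k\<close> is surjective, hence injective, and \<open>id - \<psi>\<close> has trivial kernel.\<close>

lemma additive_smult_int:
  fixes f :: "int ^ 'm \<Rightarrow> int ^ 'n"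
  assumes "Modules.additive f"
  shows "f (c *s x) = c *s f x"
proof (induction c rule: int_induct[where k = 0])
  case base
  show ?case by (simp add: Modules.additive.zero[OF assms])
next
  case (step1 i)
  then show ?case by (simp add: vector_sadd_rdistrib Modules.additive.add[OF assms])
next
  case (step2 i)
  then show ?case by (simp add: vector_sub_rdistrib Modules.additive.diff[OF assms])
qed

lemma additive_funpow:
  fixes f :: "'a::ab_group_add \<Rightarrow> 'a"
  shows "Modules.additive f \<Longrightarrow> Modules.additive (f ^^ n)"
  by (induction n) (auto simp: Modules.additive_def)

lemma is_aut_additive: "is_aut \<psi> \<Longrightarrow> Modules.additive \<psi>"
  by (simp add: is_aut_def Modules.additive_def)

lemma is_aut_additive_inv:
  assumes "is_aut \<psi>"
  shows "Modules.additive (inv \<psi>)"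
proof
  fix x y
  have "bij \<psi>" and "\<psi> (a + b) = \<psi> a + \<psi> b" for a b
    using assms by (simp_all add: is_aut_def)
  then have "\<psi> (inv \<psi> x + inv \<psi> y) = x + y"
    by (simp add: bij_is_surj surj_f_inv_f)
  then show "inv \<psi> (x + y) = inv \<psi> x + inv \<psi> y"
    using \<open>bij \<psi>\<close> by (metis bij_is_inj inv_f_f)
qed

lemma orbit_self: "r \<in> orbit \<psi> r"
  unfolding orbit_def by (auto intro!: exI[of _ 0])

lemma orbit_smult:
  fixes \<psi> :: "int ^ 'k \<Rightarrow> int ^ 'k"
  assumes "is_aut \<psi>"
  shows "orbit \<psi> (c *s r) = (*s) c ` orbit \<psi> r"
proof -
  have "(\<psi> ^^ n) (c *s r) = c *s (\<psi> ^^ n) r" for n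
    by (rule additive_smult_int[OF additive_funpow[OF is_aut_additive[OF assms]]])
  moreover have "(inv \<psi> ^^ n) (c *s r) = c *s (inv \<psi> ^^ n) r" for n
    by (rule additive_smult_int[OF additive_funpow[OF is_aut_additive_inv[OF assms]]])
  ultimately show ?thesis
    unfolding orbit_def by auto
qed

lemma orbit_smult_eqpoll:
  fixes \<psi> :: "int ^ 'k \<Rightarrow> int ^ 'k"
  assumes "is_aut \<psi>" and "c \<noteq> 0"
  shows "orbit \<psi> (c *s r) \<approx> orbit \<psi> r"
proof -
  have "inj ((*s) c :: int ^ 'k \<Rightarrow> int ^ 'k)"
    using \<open>c \<noteq> 0\<close> by (auto simp: inj_def vec_eq_iff)
  then show ?thesis
    unfolding orbit_smult[OF \<open>is_aut \<psi>\<close>] by (meson inj_on_image_eqpoll_self inj_on_subset subset_UNIV)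
qed

lemma pow_smult_not_multiple:
  fixes r y :: "int ^ 'k"
  assumes "r $ i \<noteq> 0" and "\<bar>r $ i\<bar> < m" and "j < l"
  shows "m ^ j *s r \<noteq> m ^ l *s y"
proof
  assume "m ^ j *s r = m ^ l *s y"
  then have "m ^ j * r $ i = m ^ j * (m ^ (l - j) * y $ i)"
    using \<open>j < l\<close> by (metis vector_smult_component power_add le_add_diff_inverse less_imp_le mult.assoc)
  moreover have "m > 0"
    using assms(1,2) by linarith
  ultimately have "m ^ (l - j) dvd r $ i"
    by simp
  then have "m ^ (l - j) \<le> \<bar>r $ i\<bar>"
    using dvd_imp_le_int[OF \<open>r $ i \<noteq> 0\<close>] \<open>m > 0\<close> by fastforce
  moreover have "m \<le> m ^ (l - j)"
    using \<open>m > 0\<close> \<open>j < l\<close> by (simp add: self_le_power)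
  ultimately show False
    using \<open>\<bar>r $ i\<bar> < m\<close> by linarith
qed

lemma infinite_equipollent_orbits:
  fixes \<psi> :: "int ^ 'k \<Rightarrow> int ^ 'k"
  assumes aut: "is_aut \<psi>" and "r \<noteq> 0"
  shows "infinite {orbit \<psi> s | s. orbit \<psi> s \<approx> orbit \<psi> r}"
proof -
  obtain i where "r $ i \<noteq> 0"
    using \<open>r \<noteq> 0\<close> by (metis vec_eq_iff zero_index)
  define m where "m = \<bar>r $ i\<bar> + 1"
  define Orb where "Orb j = orbit \<psi> (m ^ j *s r)" for j :: nat
  have "Orb j \<noteq> Orb l" if "j < l" for j l
  proof
    assume "Orb j = Orb l"
    then have "m ^ j *s r \<in> (*s) (m ^ l) ` orbit \<psi> r"
      using orbit_self[of "m ^ j *s r" \<psi>] unfolding Orb_def orbit_smult[OF aut] by simp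
    then show False
      using pow_smult_not_multiple[OF \<open>r $ i \<noteq> 0\<close> _ \<open>j < l\<close>] m_def by auto
  qed
  then have "inj Orb"
    by (metis inj_def linorder_neqE_nat)
  then have "infinite (range Orb)"
    using finite_imageD by blast
  moreover have "Orb j \<approx> orbit \<psi> r" for j
    unfolding Orb_def using orbit_smult_eqpoll[OF aut] \<open>r $ i \<noteq> 0\<close> m_def by auto
  then have "range Orb \<subseteq> {orbit \<psi> s | s. orbit \<psi> s \<approx> orbit \<psi> r}"
    unfolding Orb_def by blast
  ultimately show ?thesis
    using infinite_super by blast
qed

lemma reid_finite_multiple_in_range:
  fixes \<psi> :: "int ^ 'k \<Rightarrow> int ^ 'k"
  assumes "\<psi> 0 = 0" and "reid_finite \<psi>"
  shows "\<exists>n. n \<noteq> 0 \<and> n *s e \<in> range (\<lambda>h. h - \<psi> h)"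
proof -
  define C where "C j = reid_rel \<psi> `` {int j *s e}" for j :: nat
  have "range C \<subseteq> UNIV // reid_rel \<psi>"
    unfolding C_def quotient_def by blast
  then have "\<not> inj C"
    using \<open>reid_finite \<psi>\<close> finite_imageD finite_subset unfolding reid_finite_def by blast
  then obtain j l where "C j = C l" and "j < l"
    by (metis inj_def linorder_neqE_nat)
  have "int l *s e \<in> C l"
    unfolding C_def reid_rel_def using \<open>\<psi> 0 = 0\<close> by (auto intro!: exI[of _ 0])
  then have "int l *s e \<in> C j"
    using \<open>C j = C l\<close> by simp
  then obtain h where "int l *s e = int j *s e + h - \<psi> h"
    unfolding C_def reid_rel_def by auto
  then have "int (l - j) *s e = h - \<psi> h"
    using \<open>j < l\<close> by (simp add: vec_eq_iff of_nat_diff algebra_simps)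
  then show ?thesis
    using \<open>j < l\<close> by (intro exI[of _ "int (l - j)"]) auto
qed

definition real_of_int_vec :: "int ^ 'n \<Rightarrow> real ^ 'n" where
  "real_of_int_vec x = (\<chi> j. real_of_int (x $ j))"

lemma inj_real_of_int_vec: "inj real_of_int_vec"
  by (auto simp: inj_def real_of_int_vec_def vec_eq_iff)

lemma additive_real_extension:
  fixes f :: "int ^ 'm \<Rightarrow> int ^ 'n"
  assumes "Modules.additive f"
  obtains L where "linear L" and "\<And>z. L (real_of_int_vec z) = real_of_int_vec (f z)"
proof
  define L where "L y = (\<chi> j. \<Sum>i\<in>UNIV. y $ i * real_of_int (f (axis i 1) $ j))" for y :: "real ^ 'm"
  show "linear L"
    by (rule linearI) (simp_all add: L_def vec_eq_iff sum.distrib sum_distrib_left algebra_simps)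
  fix z
  have "f z = f (\<Sum>i\<in>UNIV. z $ i *s axis i 1)"
    by (simp add: basis_expansion)
  also have "\<dots> = (\<Sum>i\<in>UNIV. z $ i *s f (axis i 1))"
    by (simp add: Modules.additive.sum[OF assms] additive_smult_int[OF assms])
  finally show "L (real_of_int_vec z) = real_of_int_vec (f z)"
    by (simp add: L_def real_of_int_vec_def vec_eq_iff sum_component)
qed

lemma additive_inj_if_multiples_in_range:
  fixes f :: "int ^ 'n \<Rightarrow> int ^ 'n"
  assumes "Modules.additive f" and multiples: "\<And>i. \<exists>n. n \<noteq> 0 \<and> n *s axis i 1 \<in> range f"
  shows "inj f"
proof -
  obtain L where "linear L" and L: "\<And>z. L (real_of_int_vec z) = real_of_int_vec (f z)"
    using additive_real_extension[OF assms(1)] by blast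
  have "axis i 1 \<in> range L" for i
  proof -
    obtain n h where "n \<noteq> 0" and "n *s axis i 1 = f h"
      using multiples[of i] by blast
    then have "L (real_of_int_vec h) = real_of_int_vec (n *s axis i 1)"
      by (simp add: L)
    also have "\<dots> = real_of_int n *\<^sub>R axis i 1"
      by (simp add: real_of_int_vec_def vec_eq_iff axis_def)
    finally have "L (real_of_int_vec h) = real_of_int n *\<^sub>R axis i 1" .
    then have "L ((1 / real_of_int n) *\<^sub>R real_of_int_vec h) = axis i 1"
      using \<open>n \<noteq> 0\<close> by (simp add: linear_scale[OF \<open>linear L\<close>])
    then show ?thesis
      by (metis rangeI)
  qed
  then have "Basis \<subseteq> range L"
    by (auto simp: Basis_vec_def)
  then have "span Basis \<subseteq> L ` span UNIV"
    using span_mono[of Basis "range L"] span_linear_image[OF \<open>linear L\<close>, of UNIV] by simp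
  then have "inj L"
    using linear_surj_imp_inj[OF \<open>linear L\<close>] by auto
  then show ?thesis
    using L inj_real_of_int_vec by (metis injD inj_onI)
qed

lemma reid_finite_fixed_points:
  fixes \<psi> :: "int ^ 'k \<Rightarrow> int ^ 'k"
  assumes "is_aut \<psi>" and "reid_finite \<psi>"
  shows "{x. \<psi> x = x} = {0}"
proof -
  have "Modules.additive \<psi>"
    using is_aut_additive[OF \<open>is_aut \<psi>\<close>] .
  then have "Modules.additive (\<lambda>h. h - \<psi> h)"
    by (simp add: Modules.additive_def algebra_simps)
  moreover have "\<exists>n. n \<noteq> 0 \<and> n *s e \<in> range (\<lambda>h. h - \<psi> h)" for e
    using reid_finite_multiple_in_range Modules.additive.zero[OF \<open>Modules.additive \<psi>\<close>]
      \<open>reid_finite \<psi>\<close> by blast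
  ultimately have "inj (\<lambda>h. h - \<psi> h)"
    using additive_inj_if_multiples_in_range by blast
  moreover have "\<psi> 0 = 0"
    using Modules.additive.zero[OF \<open>Modules.additive \<psi>\<close>] .
  ultimately have "x = 0" if "\<psi> x = x" for x
    using injD[of "\<lambda>h. h - \<psi> h" x 0] that by simp
  then show ?thesis
    using \<open>\<psi> 0 = 0\<close> by auto
qed

theorem lemma3p3:
  fixes \<psi> :: "int ^ 'k \<Rightarrow> int ^ 'k"
  assumes "is_aut \<psi>"
  shows "(\<forall>r. r \<noteq> 0 \<longrightarrow>
            infinite {orbit \<psi> s | s. orbit \<psi> s \<approx> orbit \<psi> r})
       \<and> (reid_finite \<psi> \<longrightarrow> {x. \<psi> x = x} = {0})"
  using infinite_equipollent_orbits[OF assms] reid_finite_fixed_points[OF assms]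
  by blast

end
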